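(* Let $L\geq 2$, $d,M,J,N\geq 1$, let $X\in\mathbb{R}^{d\times N}$, and let $A\in\mathbb{R}^{J\times N}$ have one-hot columns. Suppose $\sigma:\mathbb{R}\to\mathbb{R}$ is Lipschitz continuous, i.e. $|\sigma(z_1)-\sigma(z_2)|\leq B|z_1-z_2|$ for some $B>0$ and all $z_1,z_2\in\mathbb{R}$. Then for all $W_1\in\mathbb{R}^{M\times d}$, $W_2,\dots,W_{L-1}\in\mathbb{R}^{M\times M}$, $W_L\in\mathbb{R}^{J\times M}$, $b_1,\dots,b_{L-1}\in\mathbb{R}^{M}$ and $c_1,\dots,c_{L-1}\in\mathbb{R}^{M\times N}$, $$\mathcal{L}(\phi_{\mathrm{FNN}}(X;\theta),A)\leq C_B\cdot\sqrt{L-1}\cdot \mathcal{L}^{\mathrm{FNN}}_{\mathrm S},$$ where $C_B=\max\{\sqrt2,\,2B,\,2B^{L-1}\}$.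
   Context: Softmax and cross-entropy: for $\boldsymbol z\in\mathbb{R}^J$ and one-hot $\boldsymbol\alpha\in\mathbb{R}^J$ (entries in $\{0,1\}$ summing to $1$), $\ell(\boldsymbol z,\boldsymbol\alpha)=-\sum_j\alpha_j\ln\big(e^{z_j}/\sum_{k}e^{z_k}\big)$. For $Z=[\boldsymbol z_1\cdots\boldsymbol z_N]$, $A=[\boldsymbol\alpha_1\cdots\boldsymbol\alpha_N]$: $\mathcal{L}_{\mathrm{vec}}(Z,A)=[\ell(\boldsymbol z_n,\boldsymbol\alpha_n)]_{n=1}^N\in\mathbb{R}^N$ and $\mathcal{L}(Z,A)=\frac1N\sum_{n=1}^N\ell(\boldsymbol z_n,\boldsymbol\alpha_n)$. The fully connected network with parameters $\theta=\{W_L,W_l,b_l\}_{l=1}^{L-1}$ is $\phi_{\mathrm{FNN}}(\boldsymbol x;\theta)=W_L\sigma(W_{L-1}\sigma(\cdots\sigma(W_1\boldsymbol x+b_1)\cdots)+b_{L-1})$ with $\sigma$ applied entrywise, and $\phi_{\mathrm{FNN}}(X;\theta)$ is the matrix whose $n$-th column is $\phi_{\mathrm{FNN}}$ applied to the $n$-th column of $X$. With $\mathbf 1\in\mathbb{R}^N$ the all-ones vector, set weights $\omega_l=\prod_{j=l+1}^{L}\|W_j\|_{\mathrm F}^2$ for $l=1,\dots,L-1$, and $$S=\|\mathcal{L}_{\mathrm{vec}}(W_L\sigma(c_{L-1}),A)\|_2^2+\sum_{l=2}^{L-1}\omega_l\|W_l\sigma(c_{l-1})+b_l\mathbf 1^\top-c_l\|_{\mathrm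 F}^2+\omega_1\|W_1X+b_1\mathbf 1^\top-c_1\|_{\mathrm F}^2,$$ and the layer separation loss $\mathcal{L}^{\mathrm{FNN}}_{\mathrm S}=\frac{1}{\sqrt N}S^{1/2}$. *)

theory Defs
  imports Complex_Main
begin

text \<open>Matrices are functions nat \<Rightarrow> nat \<Rightarrow> real (row, column), vectors are
functions nat \<Rightarrow> real; all sums range over the explicit dimensions, so entries
outside the index ranges are irrelevant. Layers are indexed 1..L:
W l is the l-th weight matrix (W 1 is M x d, W l is M x M for 2 \<le> l \<le> L-1,
W L is J x M), b l \<in> R^M, c l \<in> R^(M x N).\<close>

definition ce_loss :: "nat \<Rightarrow> (nat \<Rightarrow> real) \<Rightarrow> (nat \<Rightarrow> real) \<Rightarrow> real" where
  "ce_loss J z \<alpha> = - (\<Sum>j<J. \<alpha> j * ln (exp (z j) / (\<Sum>k<J. exp (z k))))"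

definition one_hot_cols :: "nat \<Rightarrow> nat \<Rightarrow> (nat \<Rightarrow> nat \<Rightarrow> real) \<Rightarrow> bool" where
  "one_hot_cols J N A \<longleftrightarrow>
     (\<forall>n<N. (\<forall>j<J. A j n = 0 \<or> A j n = 1) \<and> (\<Sum>j<J. A j n) = 1)"

definition mean_ce :: "nat \<Rightarrow> nat \<Rightarrow> (nat \<Rightarrow> nat \<Rightarrow> real) \<Rightarrow> (nat \<Rightarrow> nat \<Rightarrow> real) \<Rightarrow> real" where
  "mean_ce J N Z A = (1 / real N) * (\<Sum>n<N. ce_loss J (\<lambda>j. Z j n) (\<lambda>j. A j n))"

fun fnn_hidden :: "(real \<Rightarrow> real) \<Rightarrow> nat \<Rightarrow> nat \<Rightarrow> (nat \<Rightarrow> nat \<Rightarrow> nat \<Rightarrow> real)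
    \<Rightarrow> (nat \<Rightarrow> nat \<Rightarrow> real) \<Rightarrow> (nat \<Rightarrow> real) \<Rightarrow> nat \<Rightarrow> nat \<Rightarrow> real" where
  "fnn_hidden \<sigma> d M W b x 0 = x"
| "fnn_hidden \<sigma> d M W b x (Suc l) =
     (\<lambda>i. \<sigma> ((\<Sum>k<(if l = 0 then d else M). W (Suc l) i k * fnn_hidden \<sigma> d M W b x l k)
              + b (Suc l) i))"

definition phi_fnn :: "(real \<Rightarrow> real) \<Rightarrow> nat \<Rightarrow> nat \<Rightarrow> nat \<Rightarrow> (nat \<Rightarrow> nat \<Rightarrow> nat \<Rightarrow> real)
    \<Rightarrow> (nat \<Rightarrow> nat \<Rightarrow> real) \<Rightarrow> (nat \<Rightarrow> real) \<Rightarrow> nat \<Rightarrow> real" where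
  "phi_fnn \<sigma> L d M W b x = (\<lambda>j. \<Sum>k<M. W L j k * fnn_hidden \<sigma> d M W b x (L - 1) k)"

definition phi_fnn_mat :: "(real \<Rightarrow> real) \<Rightarrow> nat \<Rightarrow> nat \<Rightarrow> nat \<Rightarrow> (nat \<Rightarrow> nat \<Rightarrow> nat \<Rightarrow> real)
    \<Rightarrow> (nat \<Rightarrow> nat \<Rightarrow> real) \<Rightarrow> (nat \<Rightarrow> nat \<Rightarrow> real) \<Rightarrow> nat \<Rightarrow> nat \<Rightarrow> real" where
  "phi_fnn_mat \<sigma> L d M W b X = (\<lambda>j n. phi_fnn \<sigma> L d M W b (\<lambda>i. X i n) j)"

definition frob2 :: "nat \<Rightarrow> nat \<Rightarrow> (nat \<Rightarrow> nat \<Rightarrow> real) \<Rightarrow> real" where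
  "frob2 m n Q = (\<Sum>i<m. \<Sum>k<n. (Q i k)^2)"

definition sep_weight :: "nat \<Rightarrow> nat \<Rightarrow> nat \<Rightarrow> nat \<Rightarrow> (nat \<Rightarrow> nat \<Rightarrow> nat \<Rightarrow> real) \<Rightarrow> nat \<Rightarrow> real" where
  "sep_weight L d M J W l =
     (\<Prod>j\<in>{l+1..L}. frob2 (if j = L then J else M) (if j = 1 then d else M) (W j))"

definition sep_S :: "(real \<Rightarrow> real) \<Rightarrow> nat \<Rightarrow> nat \<Rightarrow> nat \<Rightarrow> nat \<Rightarrow> nat
    \<Rightarrow> (nat \<Rightarrow> nat \<Rightarrow> real) \<Rightarrow> (nat \<Rightarrow> nat \<Rightarrow> real)
    \<Rightarrow> (nat \<Rightarrow> nat \<Rightarrow> nat \<Rightarrow> real) \<Rightarrow> (nat \<Rightarrow> nat \<Rightarrow> real) \<Rightarrow> (nat \<Rightarrow> nat \<Rightarrow> nat \<Rightarrow> real) \<Rightarrow> real" where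
  "sep_S \<sigma> L d M J N X A W b c =
     (\<Sum>n<N. (ce_loss J (\<lambda>j. \<Sum>k<M. W L j k * \<sigma> (c (L - 1) k n)) (\<lambda>j. A j n))^2)
   + (\<Sum>l\<in>{2..L - 1}. sep_weight L d M J W l *
        (\<Sum>i<M. \<Sum>n<N. ((\<Sum>k<M. W l i k * \<sigma> (c (l - 1) k n)) + b l i - c l i n)^2))
   + sep_weight L d M J W 1 *
        (\<Sum>i<M. \<Sum>n<N. ((\<Sum>k<d. W 1 i k * X k n) + b 1 i - c 1 i n)^2)"

definition layer_sep_loss :: "(real \<Rightarrow> real) \<Rightarrow> nat \<Rightarrow> nat \<Rightarrow> nat \<Rightarrow> nat \<Rightarrow> nat
    \<Rightarrow> (nat \<Rightarrow> nat \<Rightarrow> real) \<Rightarrow> (nat \<Rightarrow> nat \<Rightarrow> real)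
    \<Rightarrow> (nat \<Rightarrow> nat \<Rightarrow> nat \<Rightarrow> real) \<Rightarrow> (nat \<Rightarrow> nat \<Rightarrow> real) \<Rightarrow> (nat \<Rightarrow> nat \<Rightarrow> nat \<Rightarrow> real) \<Rightarrow> real" where
  "layer_sep_loss \<sigma> L d M J N X A W b c = (1 / sqrt (real N)) * sqrt (sep_S \<sigma> L d M J N X A W b c)"

end

theory Submission
  imports Defs "HOL-Analysis.L2_Norm"
begin

(* Compare, column by column, the network logits z = W_L sigma(h_{L-1}) with the logits
   z' = W_L sigma(c_{L-1}) built from the auxiliary variables. Cross-entropy with a one-hot label
   is sqrt 2-Lipschitz in the logits, since its gradient softmax z - alpha has norm at most sqrt 2.
   The pre-activation errors e_l = |W_l h_{l-1} + b_l - c_l| satisfy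
   e_{l+1} <= r_{l+1} + B |W_{l+1}|_F e_l with r_l the residuals of the separation loss, so
   unrolling gives |z - z'| <= sum_m B^(L-m) sqrt(omega_m) r_m. Summing over the N columns,
   Cauchy-Schwarz in n and in the L-1 layers bounds the mean loss by
   sqrt(1 + 2 sum_m B^(2(L-m))) times the separation loss, and that constant is at most
   C_B sqrt(L-1). *)

lemma power2_L2_set: "(L2_set f A)\<^sup>2 = (\<Sum>i\<in>A. (f i)\<^sup>2)"
  unfolding L2_set_def by (simp add: sum_nonneg)

lemma L2_set_abs: "L2_set (\<lambda>i. \<bar>f i\<bar>) A = L2_set f A"
  unfolding L2_set_def by simp

lemma real_sqrt_prod: "sqrt (\<Prod>j\<in>K. f j) = (\<Prod>j\<in>K. sqrt (f j))"
  by (induction K rule: infinite_finite_induct) (auto simp: real_sqrt_mult)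

lemma sum_le_sqrt_card_mult_L2_set: "(\<Sum>i\<in>A. f i) \<le> sqrt (real (card A)) * L2_set f A"
proof -
  have "(\<Sum>i\<in>A. f i) \<le> (\<Sum>i\<in>A. \<bar>1::real\<bar> * \<bar>f i\<bar>)" by (rule sum_mono) simp
  also have "\<dots> \<le> L2_set (\<lambda>_. 1) A * L2_set f A" by (rule L2_set_mult_ineq)
  finally show ?thesis by (simp add: L2_set_constant)
qed

text \<open>Cauchy-Schwarz for the vectors (1, a) and (x, v).\<close>
lemma add_sum_mult_le_sqrt_mult_sqrt:
  "x + (\<Sum>m\<in>K. a m * v m) \<le> sqrt (1 + (\<Sum>m\<in>K. (a m)\<^sup>2)) * sqrt (x\<^sup>2 + (\<Sum>m\<in>K. (v m)\<^sup>2))"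
proof -
  define p where "p = L2_set a K"
  define q where "q = L2_set v K"
  have "(\<Sum>m\<in>K. a m * v m) \<le> (\<Sum>m\<in>K. \<bar>a m\<bar> * \<bar>v m\<bar>)"
    by (rule sum_mono) (simp flip: abs_mult)
  also have "\<dots> \<le> p * q" unfolding p_def q_def by (rule L2_set_mult_ineq)
  finally have "x + (\<Sum>m\<in>K. a m * v m) \<le> \<bar>x\<bar> + p * q" by simp
  also have "\<bar>x\<bar> + p * q \<le> sqrt ((1 + p\<^sup>2) * (x\<^sup>2 + q\<^sup>2))"
  proof (rule real_le_rsqrt)
    have "0 \<le> (p * \<bar>x\<bar> - q)\<^sup>2" by simp
    then show "(\<bar>x\<bar> + p * q)\<^sup>2 \<le> (1 + p\<^sup>2) * (x\<^sup>2 + q\<^sup>2)"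
      by (simp add: algebra_simps power2_eq_square)
  qed
  finally show ?thesis
    unfolding p_def q_def power2_L2_set by (simp add: real_sqrt_mult)
qed

lemma L2_set_matrix_vector_le:
  "L2_set (\<lambda>i. \<Sum>k<n. Q i k * v k) {..<m} \<le> sqrt (frob2 m n Q) * L2_set v {..<n}"
proof -
  have row: "(\<Sum>k<n. Q i k * v k)\<^sup>2 \<le> (\<Sum>k<n. (Q i k)\<^sup>2) * (\<Sum>k<n. (v k)\<^sup>2)" for i
  proof -
    have "\<bar>\<Sum>k<n. Q i k * v k\<bar> \<le> (\<Sum>k<n. \<bar>Q i k\<bar> * \<bar>v k\<bar>)"
      by (rule order_trans[OF sum_abs]) (simp add: abs_mult)
    also have "\<dots> \<le> L2_set (Q i) {..<n} * L2_set v {..<n}" by (rule L2_set_mult_ineq)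
    finally have "\<bar>\<Sum>k<n. Q i k * v k\<bar> \<le> \<bar>L2_set (Q i) {..<n} * L2_set v {..<n}\<bar>"
      by simp
    then have "(\<Sum>k<n. Q i k * v k)\<^sup>2 \<le> (L2_set (Q i) {..<n} * L2_set v {..<n})\<^sup>2"
      by (simp only: abs_le_square_iff)
    then show ?thesis by (simp add: power_mult_distrib power2_L2_set)
  qed
  have "(\<Sum>i<m. (\<Sum>k<n. Q i k * v k)\<^sup>2) \<le> (\<Sum>i<m. (\<Sum>k<n. (Q i k)\<^sup>2) * (\<Sum>k<n. (v k)\<^sup>2))"
    by (intro sum_mono row)
  also have "\<dots> = frob2 m n Q * (\<Sum>k<n. (v k)\<^sup>2)"
    by (simp add: frob2_def sum_distrib_right)
  finally have "sqrt (\<Sum>i<m. (\<Sum>k<n. Q i k * v k)\<^sup>2) \<le> sqrt (frob2 m n Q * (\<Sum>k<n. (v k)\<^sup>2))"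
    by (rule real_sqrt_le_mono)
  then show ?thesis unfolding L2_set_def by (simp add: real_sqrt_mult)
qed

lemma L2_set_lipschitz_le:
  assumes "B \<ge> 0" and "\<And>z1 z2. \<bar>\<sigma> z1 - \<sigma> z2\<bar> \<le> B * \<bar>z1 - z2\<bar>"
  shows "L2_set (\<lambda>i. \<sigma> (p i) - \<sigma> (q i)) A \<le> B * L2_set (\<lambda>i. p i - q i) A"
proof -
  have "L2_set (\<lambda>i. \<sigma> (p i) - \<sigma> (q i)) A = L2_set (\<lambda>i. \<bar>\<sigma> (p i) - \<sigma> (q i)\<bar>) A"
    by (simp add: L2_set_abs)
  also have "\<dots> \<le> L2_set (\<lambda>i. B * \<bar>p i - q i\<bar>) A"
    by (rule L2_set_mono) (use assms in auto)
  also have "\<dots> = B * L2_set (\<lambda>i. p i - q i) A"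
    using assms(1) by (simp add: L2_set_right_distrib[symmetric] L2_set_abs)
  finally show ?thesis .
qed

definition softmax :: "nat \<Rightarrow> (nat \<Rightarrow> real) \<Rightarrow> nat \<Rightarrow> real" where
  "softmax J z k = exp (z k) / (\<Sum>i<J. exp (z i))"

lemma sum_exp_pos: "(J::nat) \<ge> 1 \<Longrightarrow> (\<Sum>k<J. exp (z k :: real)) > 0"
  by (intro sum_pos) (auto simp: lessThan_empty_iff)

lemma softmax_nonneg: "softmax J z k \<ge> 0"
  unfolding softmax_def by (simp add: sum_nonneg)

lemma sum_softmax: "J \<ge> 1 \<Longrightarrow> (\<Sum>k<J. softmax J z k) = 1"
  unfolding softmax_def using sum_exp_pos[of J z] by (simp flip: sum_divide_distrib)

lemma softmax_le_one:
  assumes "k < J" shows "softmax J z k \<le> 1"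
proof -
  have "softmax J z k \<le> (\<Sum>i<J. softmax J z i)"
    using assms softmax_nonneg by (intro member_le_sum) auto
  with assms show ?thesis by (simp add: sum_softmax)
qed

lemma ce_loss_eq_ln_sum_exp:
  assumes "(\<Sum>j<J. \<alpha> j) = 1"
  shows "ce_loss J z \<alpha> = ln (\<Sum>k<J. exp (z k)) - (\<Sum>j<J. \<alpha> j * z j)"
proof -
  have "J \<ge> 1" using assms by (cases J) auto
  then have "(\<Sum>k<J. exp (z k)) > 0" by (rule sum_exp_pos)
  then have "ce_loss J z \<alpha> = - (\<Sum>j<J. \<alpha> j * (z j - ln (\<Sum>k<J. exp (z k))))"
    unfolding ce_loss_def by (simp add: ln_div)
  also have "\<dots> = ln (\<Sum>k<J. exp (z k)) * (\<Sum>j<J. \<alpha> j) - (\<Sum>j<J. \<alpha> j * z j)"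
    by (simp add: algebra_simps sum_subtractf sum_distrib_right)
  finally show ?thesis using assms by simp
qed

text \<open>Convexity of log-sum-exp: its gradient at z is softmax z. The proof applies the
  tangent line of exp at the softmax-average m of z' - z.\<close>
lemma ln_sum_exp_diff_le:
  assumes "J \<ge> 1"
  shows "ln (\<Sum>k<J. exp (z k)) - ln (\<Sum>k<J. exp (z' k)) \<le> (\<Sum>k<J. softmax J z k * (z k - z' k))"
proof -
  define S where "S = (\<Sum>k<J. exp (z k))"
  define S' where "S' = (\<Sum>k<J. exp (z' k))"
  define p where "p = softmax J z"
  define t where "t k = z' k - z k" for k
  define m where "m = (\<Sum>k<J. p k * t k)"
  have S: "S > 0" "S' > 0" unfolding S_def S'_def using assms by (auto intro: sum_exp_pos)
  have "exp m = exp m * ((\<Sum>k<J. p k) + (\<Sum>k<J. p k * t k) - m * (\<Sum>k<J. p k))"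
    using assms by (simp add: p_def sum_softmax m_def)
  also have "\<dots> = (\<Sum>k<J. p k * (exp m * (1 + (t k - m))))"
    by (simp add: algebra_simps sum.distrib sum_subtractf sum_distrib_left sum_distrib_right)
  also have "\<dots> \<le> (\<Sum>k<J. p k * exp (t k))"
  proof (intro sum_mono mult_left_mono)
    fix k
    have "exp m * (1 + (t k - m)) \<le> exp m * exp (t k - m)"
      by (intro mult_left_mono exp_ge_add_one_self) auto
    then show "exp m * (1 + (t k - m)) \<le> exp (t k)" by (simp add: exp_diff)
  qed (simp add: p_def softmax_nonneg)
  also have "\<dots> = S' / S"
    unfolding S'_def p_def t_def softmax_def sum_divide_distrib S_def[symmetric]
    by (rule sum.cong) (auto simp: exp_diff)
  finally have "m \<le> ln (S' / S)" using S by (simp add: ln_ge_iff)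
  then show ?thesis
    using S unfolding S_def[symmetric] S'_def[symmetric] m_def t_def p_def
    by (simp add: ln_div algebra_simps sum_subtractf)
qed

lemma sum_square_softmax_diff_one_hot_le:
  assumes "\<forall>j<J. \<alpha> j = 0 \<or> \<alpha> j = 1" and "(\<Sum>j<J. \<alpha> j) = 1"
  shows "(\<Sum>k<J. (softmax J z k - \<alpha> k)\<^sup>2) \<le> 2"
proof -
  have J: "J \<ge> 1" using assms(2) by (cases J) auto
  have "(\<Sum>k<J. (softmax J z k - \<alpha> k)\<^sup>2) \<le> (\<Sum>k<J. softmax J z k + \<alpha> k)"
  proof (rule sum_mono)
    fix k assume "k \<in> {..<J}"
    then have "softmax J z k \<le> 1" "\<alpha> k = 0 \<or> \<alpha> k = 1"
      using softmax_le_one assms(1) by auto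
    moreover have "softmax J z k * softmax J z k \<le> softmax J z k"
      using \<open>softmax J z k \<le> 1\<close> softmax_nonneg by (simp add: mult_left_le)
    ultimately show "(softmax J z k - \<alpha> k)\<^sup>2 \<le> softmax J z k + \<alpha> k"
      using softmax_nonneg[of J z k] by (auto simp: power2_eq_square algebra_simps)
  qed
  also have "\<dots> = 2" using J assms(2) by (simp add: sum.distrib sum_softmax)
  finally show ?thesis .
qed

lemma ce_loss_le_add_sqrt2_L2_set:
  assumes "\<forall>j<J. \<alpha> j = 0 \<or> \<alpha> j = 1" and "(\<Sum>j<J. \<alpha> j) = 1"
  shows "ce_loss J z \<alpha> \<le> ce_loss J z' \<alpha> + sqrt 2 * L2_set (\<lambda>j. z j - z' j) {..<J}"
proof -
  have J: "J \<ge> 1" using assms(2) by (cases J) auto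
  have "ce_loss J z \<alpha> - ce_loss J z' \<alpha>
      = ln (\<Sum>k<J. exp (z k)) - ln (\<Sum>k<J. exp (z' k)) - (\<Sum>k<J. \<alpha> k * (z k - z' k))"
    unfolding ce_loss_eq_ln_sum_exp[OF assms(2)] by (simp add: algebra_simps sum_subtractf)
  also have "\<dots> \<le> (\<Sum>k<J. softmax J z k * (z k - z' k)) - (\<Sum>k<J. \<alpha> k * (z k - z' k))"
    using ln_sum_exp_diff_le[OF J, of z z'] by linarith
  also have "\<dots> = (\<Sum>k<J. (softmax J z k - \<alpha> k) * (z k - z' k))"
    by (simp add: left_diff_distrib sum_subtractf)
  also have "\<dots> \<le> (\<Sum>k<J. \<bar>softmax J z k - \<alpha> k\<bar> * \<bar>z k - z' k\<bar>)"
    by (rule sum_mono) (simp flip: abs_mult)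
  also have "\<dots> \<le> L2_set (\<lambda>k. softmax J z k - \<alpha> k) {..<J} * L2_set (\<lambda>k. z k - z' k) {..<J}"
    by (rule L2_set_mult_ineq)
  also have "\<dots> \<le> sqrt 2 * L2_set (\<lambda>k. z k - z' k) {..<J}"
    using sum_square_softmax_diff_one_hot_le[OF assms]
    by (intro mult_right_mono) (auto simp: L2_set_def sum_nonneg)
  finally show ?thesis by simp
qed

definition fnn_preact :: "(real \<Rightarrow> real) \<Rightarrow> nat \<Rightarrow> nat \<Rightarrow> (nat \<Rightarrow> nat \<Rightarrow> nat \<Rightarrow> real)
    \<Rightarrow> (nat \<Rightarrow> nat \<Rightarrow> real) \<Rightarrow> (nat \<Rightarrow> real) \<Rightarrow> nat \<Rightarrow> nat \<Rightarrow> real" where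
  "fnn_preact \<sigma> d M W b x l i =
     (\<Sum>k<(if l = 1 then d else M). W l i k * fnn_hidden \<sigma> d M W b x (l - 1) k) + b l i"

text \<open>Column x of the residual W_m \<sigma>(c_{m-1}) + b_m - c_m of the separation loss, where the
  first layer reads the data x instead of \<sigma>(c_0).\<close>
definition layer_residual :: "(real \<Rightarrow> real) \<Rightarrow> nat \<Rightarrow> nat \<Rightarrow> (nat \<Rightarrow> nat \<Rightarrow> nat \<Rightarrow> real)
    \<Rightarrow> (nat \<Rightarrow> nat \<Rightarrow> real) \<Rightarrow> (nat \<Rightarrow> real) \<Rightarrow> (nat \<Rightarrow> nat \<Rightarrow> real) \<Rightarrow> nat \<Rightarrow> nat \<Rightarrow> real" where
  "layer_residual \<sigma> d M W b x c m i =
     (if m = 1 then (\<Sum>k<d. W 1 i k * x k) else (\<Sum>k<M. W m i k * \<sigma> (c (m - 1) k)))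
     + b m i - c m i"

lemma fnn_hidden_eq_preact:
  "l \<ge> 1 \<Longrightarrow> fnn_hidden \<sigma> d M W b x l = (\<lambda>i. \<sigma> (fnn_preact \<sigma> d M W b x l i))"
  by (cases l) (auto simp: fnn_preact_def)

lemma L2_set_layer_error_le:
  assumes "B \<ge> 0" and "\<And>z1 z2. \<bar>\<sigma> z1 - \<sigma> z2\<bar> \<le> B * \<bar>z1 - z2\<bar>"
  shows "L2_set (\<lambda>i. (\<Sum>k<n. Q i k * \<sigma> (p k)) - (\<Sum>k<n. Q i k * \<sigma> (q k)) + \<rho> i) {..<m}
    \<le> L2_set \<rho> {..<m} + B * sqrt (frob2 m n Q) * L2_set (\<lambda>k. p k - q k) {..<n}"
proof -
  have "L2_set (\<lambda>i. (\<Sum>k<n. Q i k * \<sigma> (p k)) - (\<Sum>k<n. Q i k * \<sigma> (q k)) + \<rho> i) {..<m}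
      = L2_set (\<lambda>i. \<rho> i + (\<Sum>k<n. Q i k * (\<sigma> (p k) - \<sigma> (q k)))) {..<m}"
    by (simp add: algebra_simps sum_subtractf)
  also have "\<dots> \<le> L2_set \<rho> {..<m} + L2_set (\<lambda>i. \<Sum>k<n. Q i k * (\<sigma> (p k) - \<sigma> (q k))) {..<m}"
    by (rule L2_set_triangle_ineq)
  also have "L2_set (\<lambda>i. \<Sum>k<n. Q i k * (\<sigma> (p k) - \<sigma> (q k))) {..<m}
      \<le> sqrt (frob2 m n Q) * L2_set (\<lambda>k. \<sigma> (p k) - \<sigma> (q k)) {..<n}"
    by (rule L2_set_matrix_vector_le)
  also have "\<dots> \<le> sqrt (frob2 m n Q) * (B * L2_set (\<lambda>k. p k - q k) {..<n})"
    by (intro mult_left_mono L2_set_lipschitz_le assms) (simp add: frob2_def sum_nonneg)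
  finally show ?thesis by (simp add: algebra_simps)
qed

text \<open>The bound obtained by unrolling the error recursion e (l + 1) \<le> r (l + 1) + B F (l + 1) e l,
  for layers l = 1, 2, \<dots>\<close>
definition unrolled_bound :: "real \<Rightarrow> (nat \<Rightarrow> real) \<Rightarrow> (nat \<Rightarrow> real) \<Rightarrow> nat \<Rightarrow> real" where
  "unrolled_bound B F r l = (\<Sum>m\<in>{1..l}. B ^ (l - m) * (\<Prod>j\<in>{m+1..l}. F j) * r m)"

lemma unrolled_bound_Suc:
  "unrolled_bound B F r (Suc l) = r (Suc l) + B * F (Suc l) * unrolled_bound B F r l"
proof -
  have "B * F (Suc l) * unrolled_bound B F r l
      = (\<Sum>m\<in>{1..l}. B ^ (Suc l - m) * (\<Prod>j\<in>{m+1..Suc l}. F j) * r m)"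
    unfolding unrolled_bound_def sum_distrib_left
    by (rule sum.cong) (auto simp: Suc_diff_le prod.cl_ivl_Suc)
  then show ?thesis by (simp add: unrolled_bound_def sum.cl_ivl_Suc)
qed

lemma le_unrolled_bound:
  assumes "1 \<le> n" and "\<And>l. 0 \<le> B * F l"
    and "e 1 \<le> r 1" and "\<And>l. 1 \<le> l \<Longrightarrow> l < n \<Longrightarrow> e (Suc l) \<le> r (Suc l) + B * F (Suc l) * e l"
  shows "e n \<le> unrolled_bound B F r n"
  using assms(1)
proof (induction n rule: dec_induct)
  case base
  then show ?case using assms(3) by (simp add: unrolled_bound_def)
next
  case (step l)
  have "e (Suc l) \<le> r (Suc l) + B * F (Suc l) * e l" using step.hyps by (rule assms(4))
  also have "\<dots> \<le> r (Suc l) + B * F (Suc l) * unrolled_bound B F r l"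
    using step.IH assms(2) by (simp add: mult_left_mono)
  finally show ?case by (simp add: unrolled_bound_Suc)
qed

lemma logit_error_le:
  assumes L: "L \<ge> 2" and B: "B \<ge> 0" and lip: "\<And>z1 z2. \<bar>\<sigma> z1 - \<sigma> z2\<bar> \<le> B * \<bar>z1 - z2\<bar>"
  shows "L2_set (\<lambda>j. phi_fnn \<sigma> L d M W b x j - (\<Sum>k<M. W L j k * \<sigma> (c (L - 1) k))) {..<J}
    \<le> (\<Sum>m\<in>{1..L-1}. B ^ (L - m) * sqrt (sep_weight L d M J W m)
                       * L2_set (layer_residual \<sigma> d M W b x c m) {..<M})"
proof -
  define F where "F j = sqrt (frob2 (if j = L then J else M) (if j = 1 then d else M) (W j))" for j
  define r where "r m = (if m < L then L2_set (layer_residual \<sigma> d M W b x c m) {..<M} else 0)" for m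
  define e where "e l = (if l < L then L2_set (\<lambda>i. fnn_preact \<sigma> d M W b x l i - c l i) {..<M}
      else L2_set (\<lambda>j. phi_fnn \<sigma> L d M W b x j - (\<Sum>k<M. W L j k * \<sigma> (c (L - 1) k))) {..<J})" for l
  \<comment> \<open>The output layer is treated as one more step of the recursion, with zero residual.\<close>
  have "e L \<le> unrolled_bound B F r L"
  proof (rule le_unrolled_bound)
    show "0 \<le> B * F l" for l using B by (simp add: F_def frob2_def sum_nonneg)
    show "e 1 \<le> r 1"
      using L by (simp add: e_def r_def fnn_preact_def layer_residual_def[abs_def])
  next
    fix l assume l: "1 \<le> l" "l < L"
    let ?D = "\<lambda>k. fnn_preact \<sigma> d M W b x l k - c l k"
    have e_l: "e l = L2_set ?D {..<M}" using l by (simp add: e_def)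
    show "e (Suc l) \<le> r (Suc l) + B * F (Suc l) * e l"
    proof (cases "Suc l < L")
      case True
      have "e (Suc l) = L2_set (\<lambda>i. (\<Sum>k<M. W (Suc l) i k * \<sigma> (fnn_preact \<sigma> d M W b x l k))
          - (\<Sum>k<M. W (Suc l) i k * \<sigma> (c l k)) + layer_residual \<sigma> d M W b x c (Suc l) i) {..<M}"
        using True l
        by (simp add: e_def fnn_preact_def[of _ _ _ _ _ _ "Suc l"] layer_residual_def
            fnn_hidden_eq_preact[OF l(1)] add_diff_eq)
      also have "\<dots> \<le> r (Suc l) + B * F (Suc l) * e l"
        using L2_set_layer_error_le[OF B lip] True l by (simp add: r_def F_def e_l)
      finally show ?thesis .
    next
      case False
      then have Suc_l: "Suc l = L" using l by simp
      have "e (Suc l) = L2_set (\<lambda>j. (\<Sum>k<M. W L j k * \<sigma> (fnn_preact \<sigma> d M W b x l k))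
          - (\<Sum>k<M. W L j k * \<sigma> (c l k)) + 0) {..<J}"
        using Suc_l by (simp add: e_def phi_fnn_def fnn_hidden_eq_preact[OF l(1)] flip: Suc_l)
      also have "\<dots> \<le> r (Suc l) + B * F (Suc l) * e l"
        using L2_set_layer_error_le[OF B lip, where \<rho> = "\<lambda>_. 0"] Suc_l l
        by (simp add: r_def F_def e_l L2_set_0')
      finally show ?thesis .
    qed
  qed (use L in simp)
  also have "unrolled_bound B F r L
      = (\<Sum>m\<in>{1..L-1}. B ^ (L - m) * sqrt (sep_weight L d M J W m)
                       * L2_set (layer_residual \<sigma> d M W b x c m) {..<M})"
  proof -
    have "{1..L} = insert L {1..L-1}" using L by auto
    moreover have "sqrt (sep_weight L d M J W m) = (\<Prod>j\<in>{m+1..L}. F j)" for m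
      by (simp add: sep_weight_def F_def real_sqrt_prod)
    ultimately show ?thesis
      unfolding unrolled_bound_def using L by (auto simp: r_def intro!: sum.cong)
  qed
  finally show ?thesis by (simp add: e_def)
qed

lemma ce_loss_column_le:
  assumes "L \<ge> 2" and "B \<ge> 0" and "\<And>z1 z2. \<bar>\<sigma> z1 - \<sigma> z2\<bar> \<le> B * \<bar>z1 - z2\<bar>"
    and "\<forall>j<J. \<alpha> j = 0 \<or> \<alpha> j = 1" and "(\<Sum>j<J. \<alpha> j) = 1"
  shows "ce_loss J (phi_fnn \<sigma> L d M W b x) \<alpha>
    \<le> ce_loss J (\<lambda>j. \<Sum>k<M. W L j k * \<sigma> (c (L - 1) k)) \<alpha>
       + (\<Sum>m\<in>{1..L-1}. sqrt 2 * B ^ (L - m)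
            * (sqrt (sep_weight L d M J W m) * L2_set (layer_residual \<sigma> d M W b x c m) {..<M}))"
proof -
  have "sqrt 2 * L2_set (\<lambda>j. phi_fnn \<sigma> L d M W b x j - (\<Sum>k<M. W L j k * \<sigma> (c (L - 1) k))) {..<J}
      \<le> sqrt 2 * (\<Sum>m\<in>{1..L-1}. B ^ (L - m) * sqrt (sep_weight L d M J W m)
                       * L2_set (layer_residual \<sigma> d M W b x c m) {..<M})"
    using logit_error_le[OF assms(1-3)] by (rule mult_left_mono) simp
  then show ?thesis
    using ce_loss_le_add_sqrt2_L2_set[OF assms(4,5), of "phi_fnn \<sigma> L d M W b x"
        "\<lambda>j. \<Sum>k<M. W L j k * \<sigma> (c (L - 1) k)"]
    by (simp add: sum_distrib_left mult.assoc)
qed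

lemma sum_add_sum_mult_le:
  assumes "\<And>m. m \<in> K \<Longrightarrow> 0 \<le> a m"
  shows "(\<Sum>n\<in>A. T n + (\<Sum>m\<in>K. a m * v m n))
    \<le> sqrt (real (card A)) * sqrt (1 + (\<Sum>m\<in>K. (a m)\<^sup>2))
       * sqrt ((\<Sum>n\<in>A. (T n)\<^sup>2) + (\<Sum>m\<in>K. \<Sum>n\<in>A. (v m n)\<^sup>2))"
proof -
  have "(\<Sum>n\<in>A. T n + (\<Sum>m\<in>K. a m * v m n)) = (\<Sum>n\<in>A. T n) + (\<Sum>m\<in>K. a m * (\<Sum>n\<in>A. v m n))"
    by (simp add: sum.distrib sum_distrib_left sum.swap[of _ K])
  also have "\<dots> \<le> sqrt (card A) * L2_set T A + (\<Sum>m\<in>K. a m * (sqrt (card A) * L2_set (v m) A))"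
    by (intro add_mono sum_mono mult_left_mono sum_le_sqrt_card_mult_L2_set) (use assms in auto)
  also have "\<dots> = sqrt (card A) * (L2_set T A + (\<Sum>m\<in>K. a m * L2_set (v m) A))"
    by (simp add: algebra_simps sum_distrib_left)
  also have "\<dots> \<le> sqrt (card A) * (sqrt (1 + (\<Sum>m\<in>K. (a m)\<^sup>2))
                   * sqrt ((L2_set T A)\<^sup>2 + (\<Sum>m\<in>K. (L2_set (v m) A)\<^sup>2)))"
    by (intro mult_left_mono add_sum_mult_le_sqrt_mult_sqrt) auto
  finally show ?thesis by (simp add: power2_L2_set mult.assoc)
qed

lemma sep_weight_nonneg: "0 \<le> sep_weight L d M J W l"
  unfolding sep_weight_def frob2_def by (intro prod_nonneg sum_nonneg) auto

lemma sep_S_eq: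
  assumes "L \<ge> 2"
  shows "sep_S \<sigma> L d M J N X A W b c
    = (\<Sum>n<N. (ce_loss J (\<lambda>j. \<Sum>k<M. W L j k * \<sigma> (c (L - 1) k n)) (\<lambda>j. A j n))\<^sup>2)
      + (\<Sum>m\<in>{1..L-1}. \<Sum>n<N. (sqrt (sep_weight L d M J W m)
          * L2_set (layer_residual \<sigma> d M W b (\<lambda>i. X i n) (\<lambda>l i. c l i n) m) {..<M})\<^sup>2)"
proof -
  have weighted: "(\<Sum>n<N. (sqrt (sep_weight L d M J W m)
          * L2_set (layer_residual \<sigma> d M W b (\<lambda>i. X i n) (\<lambda>l i. c l i n) m) {..<M})\<^sup>2)
      = sep_weight L d M J W m
          * (\<Sum>i<M. \<Sum>n<N. (layer_residual \<sigma> d M W b (\<lambda>i. X i n) (\<lambda>l i. c l i n) m i)\<^sup>2)" for m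
    by (simp add: power_mult_distrib power2_L2_set sep_weight_nonneg sum_distrib_left
        sum.swap[of _ "{..<N}"])
  have "{1..L-1} = insert 1 {2..L-1}" using assms by auto
  then show ?thesis
    unfolding sep_S_def weighted by (auto simp: layer_residual_def intro!: sum.cong)
qed

lemma power_le_max_power:
  fixes B :: real
  assumes "0 < B" and "1 \<le> k" and "k \<le> n"
  shows "B ^ k \<le> max B (B ^ n)"
proof (cases "B \<le> 1")
  case True
  then have "B ^ k \<le> B ^ 1" using assms by (intro power_decreasing) auto
  then show ?thesis by simp
next
  case False
  then have "B ^ k \<le> B ^ n" using assms by (intro power_increasing) auto
  then show ?thesis by simp
qed

lemma sqrt_one_add_sum_le_const:
  assumes L: "L \<ge> 2" and B: "B > 0"
  shows "sqrt (1 + (\<Sum>m\<in>{1..L-1}. (sqrt 2 * B ^ (L - m))\<^sup>2))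
    \<le> Max {sqrt 2, 2 * B, 2 * B ^ (L - 1)} * sqrt (real L - 1)"
proof -
  define C where "C = Max {sqrt 2, 2 * B, 2 * B ^ (L - 1)}"
  have C: "sqrt 2 \<le> C" "2 * max B (B ^ (L - 1)) \<le> C" unfolding C_def by auto
  then have "(sqrt 2)\<^sup>2 \<le> C\<^sup>2" by (intro power_mono) auto
  then have one: "1 \<le> C\<^sup>2 / 2" by simp
  have summand: "(sqrt 2 * B ^ (L - m))\<^sup>2 \<le> C\<^sup>2 / 2" if "m \<in> {1..L-1}" for m
  proof -
    have "B ^ (L - m) \<le> max B (B ^ (L - 1))"
      using that by (intro power_le_max_power[OF B]) auto
    then have "2 * B ^ (L - m) \<le> C" using C(2) by linarith
    then have "(2 * B ^ (L - m))\<^sup>2 \<le> C\<^sup>2" using B by (intro power_mono) auto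
    then show ?thesis by (simp add: power_mult_distrib)
  qed
  have "(\<Sum>m\<in>{1..L-1}. (sqrt 2 * B ^ (L - m))\<^sup>2) \<le> (\<Sum>m\<in>{1..L-1}. C\<^sup>2 / 2)"
    by (rule sum_mono) (rule summand)
  then have "1 + (\<Sum>m\<in>{1..L-1}. (sqrt 2 * B ^ (L - m))\<^sup>2) \<le> C\<^sup>2 / 2 + real (L - 1) * (C\<^sup>2 / 2)"
    using one by simp
  also have "\<dots> \<le> (real L - 1) * C\<^sup>2"
    using L by (simp add: field_simps of_nat_diff mult_right_mono)
  finally have "sqrt (1 + (\<Sum>m\<in>{1..L-1}. (sqrt 2 * B ^ (L - m))\<^sup>2)) \<le> sqrt ((real L - 1) * C\<^sup>2)"
    by (rule real_sqrt_le_mono)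
  also have "\<dots> = C * sqrt (real L - 1)"
    using order_trans[OF _ C(1), of 0] by (simp add: real_sqrt_mult)
  finally show ?thesis unfolding C_def .
qed

theorem theorem3p1:
  fixes \<sigma> :: "real \<Rightarrow> real" and B :: real and L d M J N :: nat
    and X A :: "nat \<Rightarrow> nat \<Rightarrow> real"
    and W :: "nat \<Rightarrow> nat \<Rightarrow> nat \<Rightarrow> real" and b :: "nat \<Rightarrow> nat \<Rightarrow> real"
    and c :: "nat \<Rightarrow> nat \<Rightarrow> nat \<Rightarrow> real"
  assumes "L \<ge> 2" and "d \<ge> 1" and "M \<ge> 1" and "J \<ge> 1" and "N \<ge> 1"
    and "one_hot_cols J N A"
    and "B > 0" and "\<And>z1 z2. \<bar>\<sigma> z1 - \<sigma> z2\<bar> \<le> B * \<bar>z1 - z2\<bar>"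
  shows "mean_ce J N (phi_fnn_mat \<sigma> L d M W b X) A
         \<le> Max {sqrt 2, 2 * B, 2 * B ^ (L - 1)} * sqrt (real L - 1)
            * layer_sep_loss \<sigma> L d M J N X A W b c"
proof -
  define C where "C = Max {sqrt 2, 2 * B, 2 * B ^ (L - 1)} * sqrt (real L - 1)"
  define S where "S = sep_S \<sigma> L d M J N X A W b c"
  have "(\<Sum>n<N. ce_loss J (\<lambda>j. phi_fnn_mat \<sigma> L d M W b X j n) (\<lambda>j. A j n))
      \<le> (\<Sum>n<N. ce_loss J (\<lambda>j. \<Sum>k<M. W L j k * \<sigma> (c (L - 1) k n)) (\<lambda>j. A j n)
           + (\<Sum>m\<in>{1..L-1}. sqrt 2 * B ^ (L - m) * (sqrt (sep_weight L d M J W m)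
               * L2_set (layer_residual \<sigma> d M W b (\<lambda>i. X i n) (\<lambda>l i. c l i n) m) {..<M})))"
    using assms(6) unfolding one_hot_cols_def phi_fnn_mat_def
    by (intro sum_mono ce_loss_column_le) (use assms(1,7,8) in auto)
  also have "\<dots> \<le> sqrt (real N) * sqrt (1 + (\<Sum>m\<in>{1..L-1}. (sqrt 2 * B ^ (L - m))\<^sup>2)) * sqrt S"
    using sum_add_sum_mult_le[where K = "{1..L-1}" and a = "\<lambda>m. sqrt 2 * B ^ (L - m)"
        and A = "{..<N}"] assms(7)
    unfolding S_def sep_S_eq[OF assms(1)] by simp
  also have "\<dots> \<le> sqrt (real N) * C * sqrt S"
    unfolding C_def using sep_S_eq[OF assms(1)]
    by (intro mult_right_mono mult_left_mono sqrt_one_add_sum_le_const assms(1,7))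
      (auto simp: S_def sum_nonneg)
  finally have "mean_ce J N (phi_fnn_mat \<sigma> L d M W b X) A \<le> (1 / real N) * (sqrt (real N) * C * sqrt S)"
    unfolding mean_ce_def by (simp add: divide_right_mono)
  also have "\<dots> = C * layer_sep_loss \<sigma> L d M J N X A W b c"
  proof -
    have "(1 / real N) * sqrt (real N) = 1 / sqrt (real N)"
      using assms(5) by (simp add: field_simps)
    then show ?thesis unfolding layer_sep_loss_def S_def[symmetric] by (simp add: field_simps)
  qed
  finally show ?thesis unfolding C_def .
qed

end
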